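(* Let $\mathbf{d}$ be a finite sequence of nonnegative integers. Suppose that $$4\bigl(f(\mathbf{d})-1\bigr)B(\mathbf{d}) = \sum_{\mathbf{s}+\mathbf{t}=\mathbf{d}} v(\mathbf{s})v(\mathbf{t})B(\mathbf{s})B(\mathbf{t}) \quad\text{and}\quad \binom{f(\mathbf{d})-1}{2}B(\mathbf{d}) = \sum_{\mathbf{s}+\mathbf{t}=\mathbf{d}} \bigl(f(\mathbf{s})-1\bigr)\binom{v(\mathbf{t})}{2}B(\mathbf{s})B(\mathbf{t}).$$ Then $$\left((f(\mathbf{d})-1)\,v(\mathbf{d}) + \binom{f(\mathbf{d})-1}{2}\right)B(\mathbf{d}) = \sum_{\mathbf{s}+\mathbf{t}=\mathbf{d}} \bigl(v(\mathbf{s})+f(\mathbf{s})-1\bigr)\binom{v(\mathbf{t})}{2}B(\mathbf{s})B(\mathbf{t}),$$ equivalently $$\left(\binom{n(\mathbf{d})+1}{2}-\binom{v(\mathbf{d})}{2}\right)B(\mathbf{d}) = \sum_{\mathbf{s}+\mathbf{t}=\mathbf{d}} \bigl(1+n(\mathbf{s})\bigr)\binom{v(\mathbf{t})}{2}B(\mathbf{s})B(\mathbf{t}).$$ All sums run over ordered pairs $(\mathbf{s},\mathbf{t})$ of finite sequences of nonnegative integers with $\mathbf{s}+\mathbf{t}=\mathbf{d}$ componentwise.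
   Context: Maps are rooted planar maps (embeddings of finite connected multigraphs in the sphere up to orientation-preserving homeomorphism, with a distinguished half-edge). A map is bipartite if all its cycles have even length. For a finite sequence $\mathbf{d}=(d_1,d_2,\ldots)$ of nonnegative integers, $B(\mathbf{d})$ is the number of rooted planar bipartite maps with exactly $d_i$ faces of degree $2i$ for each $i$, with convention $B(\mathbf{0})=0$. Set $f(\mathbf{d})=\sum_i d_i$, $n(\mathbf{d})=\sum_i i\,d_i$, $v(\mathbf{d})=n(\mathbf{d})+2-f(\mathbf{d})$. *)

theory Defs
  imports Complex_Main "HOL-Combinatorics.Permutations"
begin

text \<open>A labelled map with m edges is a pair (sigma, alpha) of
permutations of the half-edges {..<2m}: sigma gives the cyclic order of half-edges around
vertices, alpha is a fixed-point-free involution pairing half-edges into edges, and the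
group generated by sigma and alpha acts transitively (connectedness). Faces are the cycles
of sigma o alpha. Rooted maps are labelled maps up to relabellings fixing the root
half-edge 0; orientation-preserving isomorphism classes of rooted maps correspond exactly
to such classes.\<close>

definition cyc :: "(nat \<Rightarrow> nat) \<Rightarrow> nat \<Rightarrow> nat set" where
  "cyc p x = {(p ^^ k) x | k. True}"

definition cycles_of :: "(nat \<Rightarrow> nat) \<Rightarrow> nat set \<Rightarrow> nat set set" where
  "cycles_of p S = cyc p ` S"

definition labelled_map :: "nat \<Rightarrow> (nat \<Rightarrow> nat) \<Rightarrow> (nat \<Rightarrow> nat) \<Rightarrow> bool" where
  "labelled_map m \<sigma> \<alpha> \<longleftrightarrow>
     \<sigma> permutes {..<2*m} \<and> \<alpha> permutes {..<2*m} \<and>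
     (\<forall>x<2*m. \<alpha> x \<noteq> x \<and> \<alpha> (\<alpha> x) = x) \<and>
     (\<forall>x<2*m. \<forall>y<2*m. (x, y) \<in> ({(z, \<sigma> z) | z. z < 2*m} \<union> {(z, \<alpha> z) | z. z < 2*m})\<^sup>*)"

definition planar_map :: "nat \<Rightarrow> (nat \<Rightarrow> nat) \<Rightarrow> (nat \<Rightarrow> nat) \<Rightarrow> bool" where
  "planar_map m \<sigma> \<alpha> \<longleftrightarrow>
     int (card (cycles_of \<sigma> {..<2*m})) - int m + int (card (cycles_of (\<sigma> \<circ> \<alpha>) {..<2*m})) = 2"

definition bipartite_map :: "nat \<Rightarrow> (nat \<Rightarrow> nat) \<Rightarrow> (nat \<Rightarrow> nat) \<Rightarrow> bool" where
  "bipartite_map m \<sigma> \<alpha> \<longleftrightarrow>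
     (\<exists>col :: nat \<Rightarrow> bool. \<forall>x<2*m. col (\<sigma> x) = col x \<and> col (\<alpha> x) \<noteq> col x)"

definition face_profile :: "nat \<Rightarrow> (nat \<Rightarrow> nat) \<Rightarrow> (nat \<Rightarrow> nat) \<Rightarrow> (nat \<Rightarrow> nat) \<Rightarrow> bool" where
  "face_profile m \<sigma> \<alpha> d \<longleftrightarrow>
     (\<forall>i\<ge>1. card {F \<in> cycles_of (\<sigma> \<circ> \<alpha>) {..<2*m}. card F = 2*i} = d i)"

text \<open>Sequences d = (d_1, d_2, ...) are functions nat => nat; index 0 is unused.\<close>
definition fcount :: "(nat \<Rightarrow> nat) \<Rightarrow> nat" where
  "fcount d = (\<Sum>i\<in>{i. i \<ge> 1 \<and> d i \<noteq> 0}. d i)"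

definition ncount :: "(nat \<Rightarrow> nat) \<Rightarrow> nat" where
  "ncount d = (\<Sum>i\<in>{i. i \<ge> 1 \<and> d i \<noteq> 0}. i * d i)"

definition vcount :: "(nat \<Rightarrow> nat) \<Rightarrow> int" where
  "vcount d = int (ncount d) + 2 - int (fcount d)"

definition good_map :: "(nat \<Rightarrow> nat) \<Rightarrow> (nat \<Rightarrow> nat) \<Rightarrow> (nat \<Rightarrow> nat) \<Rightarrow> bool" where
  "good_map d \<sigma> \<alpha> \<longleftrightarrow> (let m = ncount d in
     labelled_map m \<sigma> \<alpha> \<and> planar_map m \<sigma> \<alpha> \<and> bipartite_map m \<sigma> \<alpha> \<and> face_profile m \<sigma> \<alpha> d)"

definition rooted_class :: "nat \<Rightarrow> (nat \<Rightarrow> nat) \<Rightarrow> (nat \<Rightarrow> nat) \<Rightarrow> ((nat \<Rightarrow> nat) \<times> (nat \<Rightarrow> nat)) set" where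
  "rooted_class m \<sigma> \<alpha> = {(\<pi> \<circ> \<sigma> \<circ> inv \<pi>, \<pi> \<circ> \<alpha> \<circ> inv \<pi>) | \<pi>. \<pi> permutes {..<2*m} \<and> \<pi> 0 = 0}"

definition B :: "(nat \<Rightarrow> nat) \<Rightarrow> nat" where
  "B d = (if (\<forall>i\<ge>1. d i = 0) then 0
          else card {rooted_class (ncount d) \<sigma> \<alpha> | \<sigma> \<alpha>. good_map d \<sigma> \<alpha>})"

definition splits :: "(nat \<Rightarrow> nat) \<Rightarrow> ((nat \<Rightarrow> nat) \<times> (nat \<Rightarrow> nat)) set" where
  "splits d = {(s, t). \<forall>i. s i + t i = d i}"

end

theory Submission
  imports Defs
begin

text \<open>Since \<open>f\<close> and \<open>n\<close> are additive, every splitting \<open>s + t = d\<close> satisfies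
  \<open>v(s) + v(t) = v(d) + 2\<close>, hence \<open>v(s) C(v(t),2) + v(t) C(v(s),2) = v(d) v(s) v(t) / 2\<close>.
  Symmetrising in \<open>(s, t)\<close>, the first hypothesis therefore evaluates
  \<open>\<Sum> v(s) C(v(t),2) B(s) B(t)\<close> to \<open>(f(d) - 1) v(d) B(d)\<close>; adding the second hypothesis gives
  the first identity, and the second is the first rewritten with \<open>v = n + 2 - f\<close>.  No property of
  \<open>B\<close> (nor \<open>d 0 = 0\<close>) is used beyond the two hypotheses.\<close>

lemma gchoose_two: "(x :: 'a :: field_char_0) gchoose 2 = x * (x - 1) / 2"
  by (simp add: numeral_2_eq_2 gbinomial_Suc atLeast0_atMost_Suc)

lemma weighted_count_add:
  fixes d s t c :: "nat \<Rightarrow> nat"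
  assumes fin: "finite {i. d i \<noteq> 0}" and st: "\<forall>i. s i + t i = d i"
  shows "(\<Sum>i | i \<ge> 1 \<and> s i \<noteq> 0. c i * s i) + (\<Sum>i | i \<ge> 1 \<and> t i \<noteq> 0. c i * t i)
       = (\<Sum>i | i \<ge> 1 \<and> d i \<noteq> 0. c i * d i)"
proof -
  define S where "S = {i. i \<ge> 1 \<and> d i \<noteq> 0}"
  have "finite S" unfolding S_def using fin by (rule rev_finite_subset) auto
  have on_S: "(\<Sum>i | i \<ge> 1 \<and> u i \<noteq> 0. c i * u i) = (\<Sum>i\<in>S. c i * u i)"
    if "\<forall>i. u i \<le> d i" for u
    by (rule sum.mono_neutral_left[OF \<open>finite S\<close>]) (use that in \<open>auto simp: S_def intro: less_le_trans\<close>)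
  have s_le: "\<forall>i. s i \<le> d i" and t_le: "\<forall>i. t i \<le> d i"
    using st by (metis le_add1 le_add2)+
  have "(\<Sum>i | i \<ge> 1 \<and> s i \<noteq> 0. c i * s i) + (\<Sum>i | i \<ge> 1 \<and> t i \<noteq> 0. c i * t i)
           = (\<Sum>i\<in>S. c i * s i) + (\<Sum>i\<in>S. c i * t i)"
    by (simp only: on_S[OF s_le] on_S[OF t_le])
  also have "\<dots> = (\<Sum>i\<in>S. c i * d i)"
    by (simp add: sum.distrib[symmetric] st[rule_format, symmetric] add_mult_distrib2)
  finally show ?thesis
    unfolding S_def .
qed

lemma fcount_add:
  assumes "finite {i. d i \<noteq> 0}" "\<forall>i. s i + t i = d i"
  shows "fcount s + fcount t = fcount d"
  using weighted_count_add[OF assms, of "\<lambda>_. 1"] by (simp add: fcount_def)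

lemma ncount_add:
  assumes "finite {i. d i \<noteq> 0}" "\<forall>i. s i + t i = d i"
  shows "ncount s + ncount t = ncount d"
  using weighted_count_add[OF assms, of "\<lambda>i. i"] by (simp add: ncount_def)

lemma vcount_add:
  assumes "finite {i. d i \<noteq> 0}" "(s, t) \<in> splits d"
  shows "vcount s + vcount t = vcount d + 2"
proof -
  have st: "\<forall>i. s i + t i = d i"
    using assms(2) by (simp add: splits_def)
  show ?thesis
    using fcount_add[OF assms(1) st] ncount_add[OF assms(1) st] unfolding vcount_def by linarith
qed

lemma sum_splits_swap:
  "(\<Sum>(s, t)\<in>splits d. g s t) = (\<Sum>(s, t)\<in>splits d. g t s)"
proof -
  have "bij_betw prod.swap (splits d) (splits d)"
    by (rule bij_betwI[where g = prod.swap]) (auto simp: splits_def add.commute)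
  from sum.reindex_bij_betw[OF this, of "\<lambda>(s, t). g s t"] show ?thesis
    by (simp add: case_prod_unfold)
qed

lemma sum_splits_vcount_gchoose_two:
  fixes b :: "(nat \<Rightarrow> nat) \<Rightarrow> 'a :: field_char_0"
  assumes fin: "finite {i. d i \<noteq> 0}"
  shows "(\<Sum>(s, t)\<in>splits d. of_int (vcount s) * (of_int (vcount t) gchoose 2) * b s * b t)
       = of_int (vcount d) / 4 * (\<Sum>(s, t)\<in>splits d. of_int (vcount s) * of_int (vcount t) * b s * b t)"
    (is "?A = _")
proof -
  let ?v = "\<lambda>s. (of_int (vcount s) :: 'a)"
  have "2 * ?A = (\<Sum>(s, t)\<in>splits d.
          ?v s * (?v t gchoose 2) * b s * b t + ?v t * (?v s gchoose 2) * b t * b s)"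
    using sum_splits_swap[of "\<lambda>s t. ?v s * (?v t gchoose 2) * b s * b t" d]
    by (simp add: sum.distrib case_prod_unfold)
  also have "\<dots> = (\<Sum>(s, t)\<in>splits d. ?v d / 2 * (?v s * ?v t * b s * b t))"
  proof (rule sum.cong[OF refl], clarify)
    fix s t assume "(s, t) \<in> splits d"
    then have v_d: "?v d = ?v s + ?v t - 2"
      using vcount_add[OF fin] by (metis add_diff_cancel_right' of_int_add of_int_numeral)
    show "?v s * (?v t gchoose 2) * b s * b t + ?v t * (?v s gchoose 2) * b t * b s
        = ?v d / 2 * (?v s * ?v t * b s * b t)"
      unfolding v_d gchoose_two by (simp add: field_simps)
  qed
  also have "\<dots> = ?v d / 2 * (\<Sum>(s, t)\<in>splits d. ?v s * ?v t * b s * b t)"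
    by (simp add: sum_distrib_left case_prod_unfold)
  finally show ?thesis
    by (simp add: field_simps)
qed

theorem mainTheorem3:
  fixes d :: "nat \<Rightarrow> nat"
  assumes fin: "finite {i. d i \<noteq> 0}"
    and d0: "d 0 = 0"
    and h1: "4 * (of_nat (fcount d) - 1) * of_nat (B d)
             = (\<Sum>(s, t)\<in>splits d. of_int (vcount s) * of_int (vcount t) * of_nat (B s) * (of_nat (B t) :: rat))"
    and h2: "((of_nat (fcount d) - 1) gchoose 2) * of_nat (B d)
             = (\<Sum>(s, t)\<in>splits d. (of_nat (fcount s) - 1) * (of_int (vcount t) gchoose 2) * of_nat (B s) * (of_nat (B t) :: rat))"
  shows "(((of_nat (fcount d) - 1) * of_int (vcount d) + ((of_nat (fcount d) - 1) gchoose 2)) * of_nat (B d)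
           = (\<Sum>(s, t)\<in>splits d. (of_int (vcount s) + of_nat (fcount s) - 1) * (of_int (vcount t) gchoose 2) * of_nat (B s) * (of_nat (B t) :: rat)))
         \<and> ((((of_nat (ncount d) + 1) gchoose 2) - (of_int (vcount d) gchoose 2)) * of_nat (B d)
           = (\<Sum>(s, t)\<in>splits d. (1 + of_nat (ncount s)) * (of_int (vcount t) gchoose 2) * of_nat (B s) * (of_nat (B t) :: rat)))"
    (is "?first \<and> ?second")
proof
  have vcount_sum: "(\<Sum>(s, t)\<in>splits d. of_int (vcount s) * (of_int (vcount t) gchoose 2) * of_nat (B s) * (of_nat (B t) :: rat))
      = (of_nat (fcount d) - 1) * of_int (vcount d) * of_nat (B d)"
    using sum_splits_vcount_gchoose_two[OF fin, of "\<lambda>s. rat_of_nat (B s)"] unfolding h1[symmetric] by (simp add: algebra_simps)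
  have split_sum: "(\<Sum>(s, t)\<in>splits d. (of_int (vcount s) + of_nat (fcount s) - 1) * (of_int (vcount t) gchoose 2) * of_nat (B s) * (of_nat (B t) :: rat))
      = (\<Sum>(s, t)\<in>splits d. of_int (vcount s) * (of_int (vcount t) gchoose 2) * of_nat (B s) * (of_nat (B t) :: rat))
      + (\<Sum>(s, t)\<in>splits d. (of_nat (fcount s) - 1) * (of_int (vcount t) gchoose 2) * of_nat (B s) * (of_nat (B t) :: rat))"
    by (simp add: sum.distrib[symmetric] case_prod_unfold algebra_simps)
  show first: ?first
    unfolding split_sum vcount_sum h2[symmetric] by (simp add: algebra_simps)
  have binom: "((of_nat (ncount d) + 1 :: rat) gchoose 2) - (of_int (vcount d) gchoose 2)
      = (of_nat (fcount d) - 1) * of_int (vcount d) + ((of_nat (fcount d) - 1) gchoose 2)"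
    by (simp add: gchoose_two vcount_def field_simps)
  have weight: "(\<Sum>(s, t)\<in>splits d. (1 + of_nat (ncount s)) * (of_int (vcount t) gchoose 2) * of_nat (B s) * (of_nat (B t) :: rat))
      = (\<Sum>(s, t)\<in>splits d. (of_int (vcount s) + of_nat (fcount s) - 1) * (of_int (vcount t) gchoose 2) * of_nat (B s) * (of_nat (B t) :: rat))"
    by (rule sum.cong[OF refl]) (auto simp: vcount_def)
  show ?second
    unfolding binom weight by (rule first)
qed

end
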